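(* Let $f:\mathbb{R}\to\mathbb{R}$ be twice continuously differentiable and let $u_L<u_U$ be such that $f$ is strictly convex or strictly concave on $[u_L,u_U]$, i.e. either $f''>0$ on $(u_L,u_U)$ or $f''<0$ on $(u_L,u_U)$. For $u_1\neq u_2$ in $[u_L,u_U]$ let $a(u_1,u_2)$ be the nonlinear average defined below. Then for all $u_1,u_2\in[u_L,u_U]$: (1) $a(u_1,u_2)$ is the same whether computed with $f$ or with $-f$; (2) $a$ is symmetric: $a(u_1,u_2)=a(u_2,u_1)$; (3) $a$ is an average: for $u_1\neq u_2$, $a(u_1,u_2)$ lies strictly between $u_1$ and $u_2$; (4) $a$ is strictly increasing in each of its two arguments; (5) $a$ is continuous at the diagonal, with $a(u_1,u_1)=u_1$, i.e. $a(v_1,v_2)\to u_1$ as $(v_1,v_2)\to(u_1,u_1)$ with $v_1\neq v_2$ in $[u_L,u_U]$.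
   Context: For $g:\mathbb{R}\to\mathbb{R}$ write $[g(u)]_{a}^{b}=g(b)-g(a)$. For $u_1\neq u_2$ (with $f'(u_1)\neq f'(u_2)$, which holds under the convexity/concavity hypothesis) the nonlinear average is $$a(u_1,u_2)=\frac{[f'(u)u-f(u)]_{u_1}^{u_2}}{[f'(u)]_{u_1}^{u_2}}=\frac{\int_{u_1}^{u_2}f''(u)\,u\,\mathrm{d}u}{\int_{u_1}^{u_2}f''(u)\,\mathrm{d}u},$$ and on the diagonal one sets $a(u,u)=u$. The function $f$ is the flux of the scalar conservation law $u_t+(f(u))_x=0$. *)

theory Defs
  imports "HOL-Analysis.Analysis"
begin

definition nl_avg :: "(real \<Rightarrow> real) \<Rightarrow> real \<Rightarrow> real \<Rightarrow> real" where
  "nl_avg f u1 u2 =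
     (if u1 = u2 then u1
      else ((deriv f u2 * u2 - f u2) - (deriv f u1 * u1 - f u1)) / (deriv f u2 - deriv f u1))"

end

theory Submission imports Defs begin

text \<open>With h(u) = f'(u) u - f(u) we have h' = f'' u, so for u1 < u2 Cauchy's mean value
  theorem applied to h and f' shows that a(u1, u2) is a point strictly between u1 and u2
  wherever f'' > 0. Cutting [x, z] at an interior point y writes a(x, z) as a mean of
  a(x, y) and a(y, z) with the positive weights f'(y) - f'(x) and f'(z) - f'(y); hence
  a(x, z) lies strictly between them, and strict monotonicity in each argument follows by
  comparing with the diagonal. Replacing f by -f does not change a, which reduces the
  concave case to the convex one; continuity at the diagonal is squeezing between
  min and max.\<close>

lemma nl_avg_diag [simp]: "nl_avg f u u = u"
  by (simp add: nl_avg_def)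

lemma nl_avg_commute: "nl_avg f x y = nl_avg f y x"
proof -
  have "(a - b) / (c - d) = (b - a) / (d - c)" for a b c d :: real
    by (metis minus_diff_eq minus_divide_divide)
  then show ?thesis
    unfolding nl_avg_def by auto
qed

lemma nl_avg_uminus:
  assumes "\<And>x. (f has_real_derivative f' x) (at x)"
  shows "nl_avg (\<lambda>u. - f u) = nl_avg f"
proof (intro ext)
  fix x y
  have "deriv f = f'" and "deriv (\<lambda>u. - f u) = (\<lambda>u. - f' u)"
    using assms DERIV_minus[OF assms] DERIV_imp_deriv by blast+
  moreover have "(a - b) / (c - d) = (- a + b) / (- c + d)" for a b c d :: real
    by (metis minus_diff_eq minus_divide_divide uminus_add_conv_diff)
  ultimately show "nl_avg (\<lambda>u. - f u) x y = nl_avg f x y"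
    unfolding nl_avg_def by (auto simp: algebra_simps)
qed

lemma nl_avg_split:
  assumes "x \<noteq> y" "y \<noteq> z" "x \<noteq> z" "deriv f x \<noteq> deriv f y" "deriv f y \<noteq> deriv f z"
  shows "nl_avg f x z
    = (nl_avg f x y * (deriv f y - deriv f x) + nl_avg f y z * (deriv f z - deriv f y))
        / (deriv f z - deriv f x)"
  using assms by (simp add: nl_avg_def)

lemma weighted_mean_strictly_between:
  fixes p q w1 w2 :: real
  assumes "w1 > 0" "w2 > 0" "p < q"
  shows "p < (p * w1 + q * w2) / (w1 + w2) \<and> (p * w1 + q * w2) / (w1 + w2) < q"
proof -
  have "p * w2 < q * w2" "p * w1 < q * w1"
    using assms by auto
  then show ?thesis
    using assms by (simp add: field_simps)
qed

lemma strict_mono_on_symmetric_mean: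
  fixes A :: "real \<Rightarrow> real \<Rightarrow> real"
  assumes mean: "\<And>x y. x \<in> I \<Longrightarrow> y \<in> I \<Longrightarrow> x < y \<Longrightarrow> x < A x y \<and> A x y < y"
    and commute: "\<And>x y. A x y = A y x"
    and diag: "\<And>x. A x x = x"
    and split: "\<And>x y z. x \<in> I \<Longrightarrow> y \<in> I \<Longrightarrow> z \<in> I \<Longrightarrow> x < y \<Longrightarrow> y < z
                  \<Longrightarrow> A x y < A x z \<and> A x z < A y z"
    and v: "v \<in> I"
  shows "strict_mono_on I (\<lambda>u. A u v)"
proof (rule strict_mono_onI)
  fix x y assume x: "x \<in> I" and y: "y \<in> I" and xy: "x < y"
  consider "y < v" | "y = v" | "x < v" "v < y" | "x = v" | "v < x"
    by linarith
  then show "A x v < A y v"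
  proof cases
    case 1
    then show ?thesis using split[OF x y v xy 1] by simp
  next
    case 2
    then show ?thesis using mean[OF x y xy] diag by simp
  next
    case 3
    then show ?thesis using mean[OF x v] mean[OF v y] commute[of y v] by force
  next
    case 4
    then show ?thesis using mean[OF x y xy] diag commute[of y v] by simp
  next
    case 5
    then show ?thesis using split[OF v x y 5 xy] commute by metis
  qed
qed

lemma tendsto_mean_at_diagonal:
  fixes A :: "real \<Rightarrow> real \<Rightarrow> real"
  assumes "\<And>x y. (x, y) \<in> S \<Longrightarrow> min x y \<le> A x y \<and> A x y \<le> max x y"
  shows "((\<lambda>p. A (fst p) (snd p)) \<longlongrightarrow> u) (at (u, u) within S)"
proof (rule tendsto_sandwich)
  show "\<forall>\<^sub>F p in at (u, u) within S. min (fst p) (snd p) \<le> A (fst p) (snd p)"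
    and "\<forall>\<^sub>F p in at (u, u) within S. A (fst p) (snd p) \<le> max (fst p) (snd p)"
    using assms by (auto simp: eventually_at_filter intro!: always_eventually)
  have "(fst \<longlongrightarrow> u) (at (u, u) within S)" "(snd \<longlongrightarrow> u) (at (u, u) within S)"
    by (auto intro!: tendsto_eq_intros)
  then show "((\<lambda>p. min (fst p) (snd p)) \<longlongrightarrow> u) (at (u, u) within S)"
    and "((\<lambda>p. max (fst p) (snd p)) \<longlongrightarrow> u) (at (u, u) within S)"
    using tendsto_min tendsto_max by fastforce+
qed

context
  fixes f f' f'' :: "real \<Rightarrow> real" and L U :: real
  assumes d1: "\<And>x. (f has_real_derivative f' x) (at x)"
    and d2: "\<And>x. (f' has_real_derivative f'' x) (at x)"
    and convex: "\<forall>x\<in>{L<..<U}. f'' x > 0"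
begin

lemma deriv_strictly_increasing:
  assumes "x \<in> {L..U}" "y \<in> {L..U}" "x < y"
  shows "f' x < f' y"
proof -
  obtain c where c: "x < c" "c < y" "f' y - f' x = (y - x) * f'' c"
    using MVT2[OF \<open>x < y\<close> d2] by blast
  moreover have "f'' c > 0"
    using convex assms c by auto
  ultimately show ?thesis
    using \<open>x < y\<close> by (metis diff_gt_0_iff_gt mult_pos_pos)
qed

lemma nl_avg_strictly_between:
  assumes "x \<in> {L..U}" "y \<in> {L..U}" "x < y"
  shows "x < nl_avg f x y \<and> nl_avg f x y < y"
proof -
  define h where "h u = f' u * u - f u" for u
  have dh: "(h has_real_derivative f'' u * u) (at u)" for u
  proof -
    have "(h has_real_derivative f'' u * u + 1 * f' u - f' u) (at u)"
      unfolding h_def[abs_def] by (intro DERIV_diff DERIV_mult d1 d2 DERIV_ident)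
    then show ?thesis by simp
  qed
  obtain c where c: "x < c" "c < y" "(h y - h x) * f'' c = (f' y - f' x) * (f'' c * c)"
    using GMVT'[OF \<open>x < y\<close>, of h f' f'' "\<lambda>z. f'' z * z"] DERIV_isCont[OF dh]
      DERIV_isCont[OF d2] d2 dh by blast
  have "f'' c > 0"
    using convex c assms by auto
  with c(3) have "h y - h x = (f' y - f' x) * c"
    by (metis mult.commute mult.left_commute mult_cancel_left less_irrefl)
  moreover have "deriv f = f'"
    using d1 DERIV_imp_deriv by blast
  ultimately have "nl_avg f x y = c"
    using deriv_strictly_increasing[OF assms] \<open>x < y\<close> by (simp add: nl_avg_def h_def)
  then show ?thesis
    using c by simp
qed

lemma nl_avg_split_strictly_between:
  assumes "x \<in> {L..U}" "y \<in> {L..U}" "z \<in> {L..U}" "x < y" "y < z"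
  shows "nl_avg f x y < nl_avg f x z \<and> nl_avg f x z < nl_avg f y z"
proof -
  have df: "deriv f = f'"
    using d1 DERIV_imp_deriv by blast
  have w1: "f' y - f' x > 0" and w2: "f' z - f' y > 0"
    using deriv_strictly_increasing assms by auto
  have "nl_avg f x z = (nl_avg f x y * (f' y - f' x) + nl_avg f y z * (f' z - f' y))
                        / ((f' y - f' x) + (f' z - f' y))"
    using nl_avg_split[of x y z f] assms w1 w2 by (simp add: df)
  moreover have "nl_avg f x y < nl_avg f y z"
    using nl_avg_strictly_between assms by (meson less_trans)
  ultimately show ?thesis
    using weighted_mean_strictly_between[OF w1 w2] by simp
qed

end

theorem lemma1:
  fixes f f' f'' :: "real \<Rightarrow> real" and uL uU :: real
  assumes d1: "\<And>x. (f has_real_derivative f' x) (at x)"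
    and d2: "\<And>x. (f' has_real_derivative f'' x) (at x)"
    and c2: "continuous_on UNIV f''"
    and lu: "uL < uU"
    and cvx: "(\<forall>x\<in>{uL<..<uU}. f'' x > 0) \<or> (\<forall>x\<in>{uL<..<uU}. f'' x < 0)"
  shows "(\<forall>u1\<in>{uL..uU}. \<forall>u2\<in>{uL..uU}. nl_avg (\<lambda>u. - f u) u1 u2 = nl_avg f u1 u2)
    \<and> (\<forall>u1\<in>{uL..uU}. \<forall>u2\<in>{uL..uU}. nl_avg f u1 u2 = nl_avg f u2 u1)
    \<and> (\<forall>u1\<in>{uL..uU}. \<forall>u2\<in>{uL..uU}. u1 \<noteq> u2 \<longrightarrow>
           min u1 u2 < nl_avg f u1 u2 \<and> nl_avg f u1 u2 < max u1 u2)
    \<and> (\<forall>v\<in>{uL..uU}. strict_mono_on {uL..uU} (\<lambda>u. nl_avg f u v)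
                        \<and> strict_mono_on {uL..uU} (\<lambda>u. nl_avg f v u))
    \<and> (\<forall>u1\<in>{uL..uU}. nl_avg f u1 u1 = u1 \<and>
           ((\<lambda>p. nl_avg f (fst p) (snd p)) \<longlongrightarrow> u1)
             (at (u1, u1) within {p. fst p \<in> {uL..uU} \<and> snd p \<in> {uL..uU} \<and> fst p \<noteq> snd p}))"
proof -
  have neg: "nl_avg (\<lambda>u. - f u) = nl_avg f"
    using nl_avg_uminus[OF d1] .
  obtain g g' g'' where g: "\<And>x. (g has_real_derivative g' x) (at x)"
      "\<And>x. (g' has_real_derivative g'' x) (at x)" "\<forall>x\<in>{uL<..<uU}. g'' x > 0"
    and g_avg: "nl_avg g = nl_avg f"
  proof (cases "\<forall>x\<in>{uL<..<uU}. f'' x > 0")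
    case True
    then show ?thesis using that d1 d2 by blast
  next
    case False
    then have "\<forall>x\<in>{uL<..<uU}. - f'' x > 0"
      using cvx by auto
    then show ?thesis
      using that[OF DERIV_minus[OF d1] DERIV_minus[OF d2]] neg by blast
  qed
  note mean = nl_avg_strictly_between[OF g, unfolded g_avg]
  note split = nl_avg_split_strictly_between[OF g, unfolded g_avg]
  have mean_minmax: "min x y < nl_avg f x y \<and> nl_avg f x y < max x y"
    if "x \<in> {uL..uU}" "y \<in> {uL..uU}" "x \<noteq> y" for x y
    using that mean[of x y] mean[of y x] nl_avg_commute[of f x y]
    by (cases "x < y") auto
  have mono: "strict_mono_on {uL..uU} (\<lambda>u. nl_avg f u v)" if "v \<in> {uL..uU}" for v
    using strict_mono_on_symmetric_mean[OF mean nl_avg_commute nl_avg_diag split that] by blast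
  have mono': "strict_mono_on {uL..uU} (\<lambda>u. nl_avg f v u)" if "v \<in> {uL..uU}" for v
    using mono[OF that] by (simp add: nl_avg_commute[of f v])
  have lim: "((\<lambda>p. nl_avg f (fst p) (snd p)) \<longlongrightarrow> u)
      (at (u, u) within {p. fst p \<in> {uL..uU} \<and> snd p \<in> {uL..uU} \<and> fst p \<noteq> snd p})" for u
    by (rule tendsto_mean_at_diagonal) (use mean_minmax in \<open>force simp: less_imp_le\<close>)
  show ?thesis
    using neg nl_avg_commute[of f] mean_minmax mono mono' lim by simp
qed

end
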